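(* Let $Q\subseteq\mathbb{R}^n$ be a convex set, $f:Q\to\mathbb{R}$ a convex function, and consider the problem $\min_{x\in Q}f(x)$ with a solution $x_*$. Let $\|\cdot\|$ be a norm on $\mathbb{R}^n$, let $d$ be a differentiable function that is $1$-strongly convex with respect to $\|\cdot\|$, and let $V(x,y)=d(x)-d(y)-\langle\nabla d(y),x-y\rangle$ be the associated Bregman divergence. Let $L>0$, $\delta\ge0$, $\tilde\delta\ge0$, and suppose that at every point $x\in Q$ we are given a $(\delta,L)$-model $(f_\delta(x);\psi_\delta(\cdot,x))$ of $f$, i.e. $\psi_\delta(\cdot,x)$ is convex on $Q$, $\psi_\delta(x,x)=0$, and for all $y\in Q$ $$0\le f(y)-\bigl(f_\delta(x)+\psi_\delta(y,x)\bigr)\le\frac{L}{2}\|y-x\|^2+\delta.$$ Starting from $x^0\in Q$, let the points $x^{k+1}\in Q$, $k=0,1,\dots$, be inexact minimizers of $\Psi(x,x^k):=\psi_\delta(x,x^k)+L\,V(x,x^k)$ over $x\in Q$ in the following sense: there exists a subgradient $g^{k+1}\in\partial_x\Psi(x,x^k)\big|_{x=x^{k+1}}$ with $$\langle g^{k+1},x^{k+1}-x_*\rangle\le\tilde\delta.$$ Let $R^2=V(x_*,x^0)$ and $\bar x^N=\frac{1}{N}\sum_{k=1}^N x^k$. Then for every $N\ge1$ $$f(\bar x^N)-f(x_* )\le\frac{LR^2}{N}+\tilde\delta+2\delta,$$ and moreover $V(x_*,x^m)\le V(x_*,x^0)$ for every $m\ge1$ such that $f(\bar x^m)-f(x_*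 )\ge\tilde\delta+2\delta$.
   Context: If the solution $x_*$ is not unique, the estimates hold in particular for the solution $x_*$ minimizing $R^2=V(x_*,x^0)$ (the inexactness condition being understood with this $x_*$). *)

theory Defs
  imports "HOL-Analysis.Analysis"
begin

definition is_norm :: "('a::real_vector \<Rightarrow> real) \<Rightarrow> bool" where
  "is_norm nrm \<longleftrightarrow>
     (\<forall>x. nrm x = 0 \<longleftrightarrow> x = 0) \<and>
     (\<forall>x y. nrm (x + y) \<le> nrm x + nrm y) \<and>
     (\<forall>c x. nrm (c *\<^sub>R x) = \<bar>c\<bar> * nrm x)"

definition strongly_convex_wrt :: "('a::real_vector \<Rightarrow> real) \<Rightarrow> real \<Rightarrow> ('a \<Rightarrow> real) \<Rightarrow> 'a set \<Rightarrow> bool" where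
  "strongly_convex_wrt nrm \<mu> d Q \<longleftrightarrow>
     (\<forall>x\<in>Q. \<forall>y\<in>Q. \<forall>t::real. 0 \<le> t \<and> t \<le> 1 \<longrightarrow>
        d (t *\<^sub>R x + (1 - t) *\<^sub>R y)
          \<le> t * d x + (1 - t) * d y - \<mu> / 2 * t * (1 - t) * (nrm (x - y))\<^sup>2)"

text \<open>Bregman divergence \<open>V(x,y) = d(x) - d(y) - \<langle>\<nabla>d(y), x - y\<rangle>\<close>; the term
  \<open>\<langle>\<nabla>d(y), x - y\<rangle>\<close> is the Frechet derivative of \<open>d\<close> at \<open>y\<close> applied to \<open>x - y\<close>.\<close>
definition bregman :: "('a::real_normed_vector \<Rightarrow> real) \<Rightarrow> 'a \<Rightarrow> 'a \<Rightarrow> real" where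
  "bregman d x y = d x - d y - frechet_derivative d (at y) (x - y)"

definition subgradient_on :: "('a::real_inner \<Rightarrow> real) \<Rightarrow> 'a set \<Rightarrow> 'a \<Rightarrow> 'a \<Rightarrow> bool" where
  "subgradient_on h Q x g \<longleftrightarrow> x \<in> Q \<and> (\<forall>y\<in>Q. h y \<ge> h x + g \<bullet> (y - x))"

definition is_model :: "('a::real_vector \<Rightarrow> real) \<Rightarrow> 'a set \<Rightarrow> ('a \<Rightarrow> real) \<Rightarrow> real \<Rightarrow> real
     \<Rightarrow> ('a \<Rightarrow> real) \<Rightarrow> ('a \<Rightarrow> 'a \<Rightarrow> real) \<Rightarrow> bool" where
  "is_model nrm Q f \<delta> L f\<delta> psi \<longleftrightarrow>
     (\<forall>x\<in>Q. convex_on Q (\<lambda>y. psi y x) \<and> psi x x = 0 \<and>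
        (\<forall>y\<in>Q. 0 \<le> f y - (f\<delta> x + psi y x) \<and>
                f y - (f\<delta> x + psi y x) \<le> L / 2 * (nrm (y - x))\<^sup>2 + \<delta>))"

end

theory Submission
  imports Defs
begin

text \<open>Put V_k = V(x_*, x_k). The subgradient condition at x_{k+1}, convexity of
  \<psi>(-, x_k) and differentiability of d give the three-point inequality
  \<psi>(x_{k+1}, x_k) + L V(x_{k+1}, x_k) + L V_{k+1} \<le> \<psi>(x_*, x_k) + L V_k + \<delta>t.
  Strong convexity of d gives V(x_{k+1}, x_k) \<ge> \<parallel>x_{k+1} - x_k\<parallel>^2/2, which absorbs the
  quadratic term of the upper model bound at x_{k+1}; with the lower model bound at x_* this
  becomes f(x_{k+1}) - f(x_*) \<le> L (V_k - V_{k+1}) + \<delta>t + \<delta>. Summing telescopes, Jensen's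
  inequality passes to the average, and V_N \<ge> 0 gives both claims.\<close>

lemma difference_quotient_tendsto_frechet_derivative:
  fixes d :: "'a::real_normed_vector \<Rightarrow> real"
  assumes "d differentiable (at z)"
  shows "((\<lambda>t. (d (z + t *\<^sub>R v) - d z) / t) \<longlongrightarrow> frechet_derivative d (at z) v) (at_right 0)"
proof -
  let ?D = "frechet_derivative d (at z)"
  have D: "(d has_derivative ?D) (at z)"
    using assms frechet_derivative_works by blast
  have "((\<lambda>t::real. z + t *\<^sub>R v) has_derivative (\<lambda>t. t *\<^sub>R v)) (at 0)"
    by (auto intro!: derivative_eq_intros)
  from has_derivative_compose[OF this] D
  have "((\<lambda>t. d (z + t *\<^sub>R v)) has_derivative (\<lambda>t. ?D (t *\<^sub>R v))) (at 0)"
    by simp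
  moreover have "(\<lambda>t. ?D (t *\<^sub>R v)) = (*) (?D v)"
    using has_derivative_linear[OF D] by (auto simp: linear_scale)
  ultimately have "((\<lambda>t. d (z + t *\<^sub>R v)) has_field_derivative ?D v) (at 0)"
    by (simp add: has_field_derivative_def)
  then have "((\<lambda>t. (d (z + t *\<^sub>R v) - d z) / t) \<longlongrightarrow> ?D v) (at 0)"
    by (simp add: has_field_derivative_iff)
  then show ?thesis
    by (rule tendsto_mono[OF at_le, rotated]) simp
qed

lemma eventually_at_right_0_le_1: "eventually (\<lambda>t. 0 < t \<and> t \<le> 1) (at_right (0::real))"
  unfolding eventually_at_right_field by (rule exI[of _ 1]) auto

lemma frechet_derivative_le_if_difference_quotient_le:
  fixes d :: "'a::real_normed_vector \<Rightarrow> real"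
  assumes "d differentiable (at z)"
    and "\<And>t. 0 < t \<Longrightarrow> t \<le> 1 \<Longrightarrow> (d (z + t *\<^sub>R v) - d z) / t \<le> c + K * t"
  shows "frechet_derivative d (at z) v \<le> c"
proof -
  have "((\<lambda>t. c + K * t) \<longlongrightarrow> c + K * 0) (at_right (0::real))"
    by (intro tendsto_intros)
  then have lim: "((\<lambda>t. c + K * t) \<longlongrightarrow> c) (at_right (0::real))"
    by simp
  show ?thesis
    by (rule tendsto_le[OF _ lim difference_quotient_tendsto_frechet_derivative[OF assms(1)]])
       (auto intro: eventually_mono[OF eventually_at_right_0_le_1] assms(2))
qed

lemma frechet_derivative_ge_if_difference_quotient_ge:
  fixes d :: "'a::real_normed_vector \<Rightarrow> real"
  assumes "d differentiable (at z)"
    and "\<And>t. 0 < t \<Longrightarrow> t \<le> 1 \<Longrightarrow> c \<le> (d (z + t *\<^sub>R v) - d z) / t"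
  shows "c \<le> frechet_derivative d (at z) v"
  by (rule tendsto_le[OF _ difference_quotient_tendsto_frechet_derivative[OF assms(1)] tendsto_const])
     (auto intro: eventually_mono[OF eventually_at_right_0_le_1] assms(2))

lemma bregman_ge_half_norm_sq:
  fixes d :: "'a::real_normed_vector \<Rightarrow> real"
  assumes sc: "strongly_convex_wrt nrm 1 d Q" and yQ: "y \<in> Q" and zQ: "z \<in> Q"
    and dz: "d differentiable (at z)"
  shows "(nrm (y - z))\<^sup>2 / 2 \<le> bregman d y z"
proof -
  let ?n = "(nrm (y - z))\<^sup>2"
  have "frechet_derivative d (at z) (y - z) \<le> d y - d z - ?n / 2"
  proof (rule frechet_derivative_le_if_difference_quotient_le[OF dz, where K = "?n / 2"])
    fix t :: real
    assume t: "0 < t" "t \<le> 1"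
    have "z + t *\<^sub>R (y - z) = t *\<^sub>R y + (1 - t) *\<^sub>R z"
      by (simp add: algebra_simps)
    moreover have "d (t *\<^sub>R y + (1 - t) *\<^sub>R z) \<le> t * d y + (1 - t) * d z - 1 / 2 * t * (1 - t) * ?n"
      using sc yQ zQ t unfolding strongly_convex_wrt_def by auto
    ultimately have "d (z + t *\<^sub>R (y - z)) - d z \<le> t * (d y - d z - ?n / 2 + ?n / 2 * t)"
      by (simp add: algebra_simps diff_divide_distrib)
    then show "(d (z + t *\<^sub>R (y - z)) - d z) / t \<le> d y - d z - ?n / 2 + ?n / 2 * t"
      using t by (simp add: pos_divide_le_eq mult.commute)
  qed
  then show ?thesis
    unfolding bregman_def by simp
qed

lemma bregman_nonneg:
  fixes d :: "'a::real_normed_vector \<Rightarrow> real"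
  assumes "strongly_convex_wrt nrm 1 d Q" and "y \<in> Q" and "z \<in> Q"
    and "d differentiable (at z)"
  shows "0 \<le> bregman d y z"
  using bregman_ge_half_norm_sq[OF assms] zero_le_power2[of "nrm (y - z)"] by linarith

lemma bregman_minus_affine:
  fixes d :: "'a::real_normed_vector \<Rightarrow> real"
  assumes "d differentiable (at w)"
  shows "bregman d ((1 - t) *\<^sub>R z + t *\<^sub>R y) w - d ((1 - t) *\<^sub>R z + t *\<^sub>R y)
           = (1 - t) * (bregman d z w - d z) + t * (bregman d y w - d y)"
proof -
  let ?D = "frechet_derivative d (at w)"
  have "linear ?D"
    using assms frechet_derivative_works has_derivative_linear by blast
  moreover have "(1 - t) *\<^sub>R z + t *\<^sub>R y - w = (1 - t) *\<^sub>R (z - w) + t *\<^sub>R (y - w)"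
    by (simp add: algebra_simps)
  ultimately have "?D ((1 - t) *\<^sub>R z + t *\<^sub>R y - w) = (1 - t) * ?D (z - w) + t * ?D (y - w)"
    by (simp add: linear_add linear_scale)
  then show ?thesis
    unfolding bregman_def by (simp add: algebra_simps)
qed

lemma bregman_prox_three_point:
  fixes d h :: "'a::real_inner \<Rightarrow> real"
  assumes cQ: "convex Q" and yQ: "y \<in> Q" and wQ: "w \<in> Q"
    and d_diff: "\<forall>u\<in>Q. d differentiable (at u)"
    and h_convex: "convex_on Q h" and L: "L > 0"
    and sg: "subgradient_on (\<lambda>u. h u + L * bregman d u w) Q z g"
  shows "h z + L * bregman d z w + L * bregman d y z + g \<bullet> (y - z) \<le> h y + L * bregman d y w"
proof -
  have zQ: "z \<in> Q"
    using sg unfolding subgradient_on_def by auto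
  define A where "A = h y + L * bregman d y w - h z - L * bregman d z w - g \<bullet> (y - z)"
  txt \<open>Along the segment from z to y the map u \<mapsto> h u + L (V(u,w) - d u) is convex, so the
    subgradient inequality bounds the difference quotients of d at z from below.\<close>
  have "d y - d z - A / L \<le> frechet_derivative d (at z) (y - z)"
  proof (rule frechet_derivative_ge_if_difference_quotient_ge)
    show "d differentiable (at z)"
      using d_diff zQ by auto
    fix t :: real
    assume t: "0 < t" "t \<le> 1"
    define yt where "yt = (1 - t) *\<^sub>R z + t *\<^sub>R y"
    have yt_eq: "z + t *\<^sub>R (y - z) = yt"
      unfolding yt_def by (simp add: algebra_simps)
    have "yt \<in> Q"
      unfolding yt_def using cQ yQ zQ t by (simp add: convex_def)
    then have "h z + L * bregman d z w + g \<bullet> (yt - z) \<le> h yt + L * bregman d yt w"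
      using sg unfolding subgradient_on_def by auto
    moreover have "g \<bullet> (yt - z) = t * (g \<bullet> (y - z))"
      unfolding yt_eq[symmetric] by simp
    moreover have "h yt \<le> (1 - t) * h z + t * h y"
      unfolding yt_def using convex_onD[OF h_convex] t zQ yQ by auto
    moreover have "bregman d yt w = d yt + (1 - t) * (bregman d z w - d z) + t * (bregman d y w - d y)"
      unfolding yt_def using bregman_minus_affine[of d w t z y] d_diff wQ by (simp add: algebra_simps)
    ultimately have "t * (L * (d y - d z) - A) \<le> L * (d yt - d z)"
      unfolding A_def by (simp add: algebra_simps)
    then have "t * (d y - d z - A / L) \<le> d yt - d z"
      using L by (simp add: field_simps)
    then show "d y - d z - A / L \<le> (d (z + t *\<^sub>R (y - z)) - d z) / t"
      using t unfolding yt_eq by (simp add: pos_le_divide_eq mult.commute)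
  qed
  then have "L * bregman d y z \<le> A"
    using L unfolding bregman_def by (simp add: field_simps)
  then show ?thesis
    unfolding A_def by simp
qed

lemma model_prox_step_descent:
  fixes f d :: "'a::real_inner \<Rightarrow> real"
  assumes cQ: "convex Q"
    and d_diff: "\<forall>u\<in>Q. d differentiable (at u)"
    and d_sc: "strongly_convex_wrt nrm 1 d Q"
    and L: "L > 0"
    and model: "is_model nrm Q f \<delta> L f\<delta> psi"
    and wQ: "w \<in> Q" and yQ: "y \<in> Q"
    and sg: "subgradient_on (\<lambda>u. psi u w + L * bregman d u w) Q z g"
  shows "f z - f y \<le> L * (bregman d y w - bregman d y z) + g \<bullet> (z - y) + \<delta>"
proof -
  have zQ: "z \<in> Q"
    using sg unfolding subgradient_on_def by auto
  have psi_convex: "convex_on Q (\<lambda>u. psi u w)"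
    and model_upper: "f z - (f\<delta> w + psi z w) \<le> L / 2 * (nrm (z - w))\<^sup>2 + \<delta>"
    and model_lower: "0 \<le> f y - (f\<delta> w + psi y w)"
    using model wQ zQ yQ unfolding is_model_def by auto
  have three_point:
    "psi z w + L * bregman d z w + L * bregman d y z + g \<bullet> (y - z) \<le> psi y w + L * bregman d y w"
    using bregman_prox_three_point[OF cQ yQ wQ d_diff psi_convex L sg] .
  have "L / 2 * (nrm (z - w))\<^sup>2 \<le> L * bregman d z w"
    using bregman_ge_half_norm_sq[OF d_sc zQ wQ] d_diff wQ L by (simp add: field_simps)
  moreover have "g \<bullet> (y - z) = - (g \<bullet> (z - y))"
    by (simp add: inner_diff_right)
  ultimately show ?thesis
    using three_point model_upper model_lower by (simp add: algebra_simps)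
qed

lemma sum_le_telescope:
  fixes a V :: "nat \<Rightarrow> real"
  assumes "\<And>k. a (Suc k) \<le> V k - V (Suc k) + c"
  shows "(\<Sum>k=1..N. a k) \<le> V 0 - V N + real N * c"
proof (induction N)
  case (Suc N)
  then show ?case
    using assms[of N] by (simp add: algebra_simps)
qed simp

lemma convex_on_average_le:
  fixes f :: "'a::real_vector \<Rightarrow> real"
  assumes "convex_on Q f" and "finite A" and "A \<noteq> {}" and "\<And>k. k \<in> A \<Longrightarrow> x k \<in> Q"
  shows "f ((1 / real (card A)) *\<^sub>R (\<Sum>k\<in>A. x k)) \<le> (\<Sum>k\<in>A. f (x k)) / real (card A)"
proof -
  have "f ((1 / real (card A)) *\<^sub>R (\<Sum>k\<in>A. x k)) = f (\<Sum>k\<in>A. (1 / real (card A)) *\<^sub>R x k)"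
    by (simp add: scaleR_sum_right)
  also have "\<dots> \<le> (\<Sum>k\<in>A. (1 / real (card A)) * f (x k))"
    by (rule convex_on_sum[OF assms(2,3,1)]) (use assms in auto)
  also have "\<dots> = (\<Sum>k\<in>A. f (x k)) / real (card A)"
    by (simp add: sum_divide_distrib)
  finally show ?thesis .
qed

lemma convex_on_average_gap_le_telescope:
  fixes f :: "'a::real_vector \<Rightarrow> real" and V :: "nat \<Rightarrow> real"
  assumes "convex_on Q f" and "\<And>k. x k \<in> Q"
    and "\<And>k. f (x (Suc k)) - a \<le> V k - V (Suc k) + c"
    and "N \<ge> 1"
  shows "f ((1 / real N) *\<^sub>R (\<Sum>k=1..N. x k)) - a \<le> (V 0 - V N) / real N + c"
proof -
  have "(\<Sum>k=1..N. f (x k) - a) \<le> V 0 - V N + real N * c"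
    using sum_le_telescope[of "\<lambda>k. f (x k) - a"] assms(3) by blast
  then have "(\<Sum>k=1..N. f (x k)) / real N \<le> (V 0 - V N) / real N + c + a"
    using assms(4) by (simp add: sum_subtractf field_simps)
  moreover have "f ((1 / real N) *\<^sub>R (\<Sum>k=1..N. x k)) \<le> (\<Sum>k=1..N. f (x k)) / real N"
    using convex_on_average_le[OF assms(1), of "{1..N}"] assms(2,4) by simp
  ultimately show ?thesis
    by linarith
qed

theorem theorem3p1:
  fixes Q :: "(real ^ 'n) set" and f :: "real ^ 'n \<Rightarrow> real"
    and nrm :: "real ^ 'n \<Rightarrow> real" and d :: "real ^ 'n \<Rightarrow> real"
    and L \<delta> \<delta>t :: real
    and f\<delta> :: "real ^ 'n \<Rightarrow> real" and psi :: "real ^ 'n \<Rightarrow> real ^ 'n \<Rightarrow> real"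
    and xs :: "real ^ 'n" and x :: "nat \<Rightarrow> real ^ 'n" and g :: "nat \<Rightarrow> real ^ 'n"
  assumes Q_convex: "convex Q"
    and f_convex: "convex_on Q f"
    and xs_sol: "xs \<in> Q" "\<forall>y\<in>Q. f xs \<le> f y"
    and nrm: "is_norm nrm"
    and d_diff: "\<forall>y\<in>Q. d differentiable (at y)"
    and d_sc: "strongly_convex_wrt nrm 1 d Q"
    and L_pos: "L > 0" and \<delta>_nn: "\<delta> \<ge> 0" and \<delta>t_nn: "\<delta>t \<ge> 0"
    and model: "is_model nrm Q f \<delta> L f\<delta> psi"
    and x_in: "\<forall>k. x k \<in> Q"
    and g_sub: "\<forall>k. subgradient_on (\<lambda>y. psi y (x k) + L * bregman d y (x k)) Q (x (Suc k)) (g (Suc k))"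
    and inexact: "\<forall>k. g (Suc k) \<bullet> (x (Suc k) - xs) \<le> \<delta>t"
  shows "(\<forall>N::nat. N \<ge> 1 \<longrightarrow>
            f ((1 / real N) *\<^sub>R (\<Sum>k=1..N. x k)) - f xs
              \<le> L * bregman d xs (x 0) / real N + \<delta>t + 2 * \<delta>)
       \<and> (\<forall>m::nat. m \<ge> 1 \<longrightarrow>
            f ((1 / real m) *\<^sub>R (\<Sum>k=1..m. x k)) - f xs \<ge> \<delta>t + 2 * \<delta> \<longrightarrow>
            bregman d xs (x m) \<le> bregman d xs (x 0))"
proof -
  define V where "V k = L * bregman d xs (x k)" for k
  have V_nonneg: "0 \<le> V k" for k
    unfolding V_def using bregman_nonneg[OF d_sc xs_sol(1)] x_in d_diff L_pos by simp
  have step: "f (x (Suc k)) - f xs \<le> V k - V (Suc k) + (\<delta>t + \<delta>)" for k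
  proof -
    have "f (x (Suc k)) - f xs
        \<le> L * (bregman d xs (x k) - bregman d xs (x (Suc k))) + g (Suc k) \<bullet> (x (Suc k) - xs) + \<delta>"
      using model_prox_step_descent[OF Q_convex d_diff d_sc L_pos model _ xs_sol(1)] x_in g_sub
      by blast
    then show ?thesis
      unfolding V_def right_diff_distrib using inexact[rule_format, of k] by linarith
  qed
  note avg = convex_on_average_gap_le_telescope[where V = V, OF f_convex x_in[rule_format] step]
  show ?thesis
  proof (intro conjI allI impI)
    fix N :: nat
    assume N: "N \<ge> 1"
    have "(V 0 - V N) / real N \<le> V 0 / real N"
      using V_nonneg[of N] by (intro divide_right_mono) auto
    then show "f ((1 / real N) *\<^sub>R (\<Sum>k=1..N. x k)) - f xs \<le> L * bregman d xs (x 0) / real N + \<delta>t + 2 * \<delta>"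
      using avg[OF N] \<delta>_nn unfolding V_def by linarith
  next
    fix m :: nat
    assume m: "m \<ge> 1" and "f ((1 / real m) *\<^sub>R (\<Sum>k=1..m. x k)) - f xs \<ge> \<delta>t + 2 * \<delta>"
    then have "0 \<le> (V 0 - V m) / real m"
      using avg[OF m] \<delta>_nn by linarith
    then have "V m \<le> V 0"
      using m by (simp add: zero_le_divide_iff)
    then show "bregman d xs (x m) \<le> bregman d xs (x 0)"
      using L_pos unfolding V_def by simp
  qed
qed

end
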